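(* Let $S$ be any set, $m\ge 2$, $s:I_m\to S$, and $s'=\tau_{m-1}s$. If $(s,s')$ is a special pair, then $s=s'$.
   Context: $\mathcal{S}_m$ acts on sequences $s:I_m\to S$ by $\sigma s=s\circ\sigma^{-1}$. For $i\in I_m$, $\tau_i(j)=i+1-j$ for $j\le i$ and $\tau_i(j)=j$ for $j>i$; thus $(\tau_{m-1}s)(i)=s(m-i)$ for $i<m$ and $(\tau_{m-1}s)(m)=s(m)$. $(\mathrm{rev}\,s)(i)=s(m+1-i)$. An element $A\in\mathrm{Im}\,s$ is direct for $(s,s')$ if $s'(i)=A$ for all $i\in s^{-1}(A)$, and reverse for $(s,s')$ if $(\mathrm{rev}\,s')(i)=A$ for all $i\in s^{-1}(A)$. The pair $(s,s')$ is special if every $A\in\mathrm{Im}\,s$ is direct or reverse for $(s,s')$. *)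

theory Defs
  imports Main
begin

text \<open>Sequences s : I_m \<rightarrow> S with I_m = {1..m} are represented as functions
  nat \<Rightarrow> 'a, of which only the values on {1..m} matter.\<close>

definition I :: "nat \<Rightarrow> nat set" where
  "I m = {1..m}"

definition perm_act :: "nat \<Rightarrow> (nat \<Rightarrow> nat) \<Rightarrow> (nat \<Rightarrow> 'a) \<Rightarrow> (nat \<Rightarrow> 'a)" where
  "perm_act m \<sigma> s = (\<lambda>i. s (inv_into (I m) \<sigma> i))"

definition tau :: "nat \<Rightarrow> nat \<Rightarrow> nat" where
  "tau i j = (if j \<le> i then i + 1 - j else j)"

definition rev_seq :: "nat \<Rightarrow> (nat \<Rightarrow> 'a) \<Rightarrow> (nat \<Rightarrow> 'a)" where
  "rev_seq m s = (\<lambda>i. s (m + 1 - i))"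

definition is_direct :: "nat \<Rightarrow> (nat \<Rightarrow> 'a) \<Rightarrow> (nat \<Rightarrow> 'a) \<Rightarrow> 'a \<Rightarrow> bool" where
  "is_direct m s s' A \<longleftrightarrow> (\<forall>i \<in> I m. s i = A \<longrightarrow> s' i = A)"

definition is_reverse :: "nat \<Rightarrow> (nat \<Rightarrow> 'a) \<Rightarrow> (nat \<Rightarrow> 'a) \<Rightarrow> 'a \<Rightarrow> bool" where
  "is_reverse m s s' A \<longleftrightarrow> (\<forall>i \<in> I m. s i = A \<longrightarrow> rev_seq m s' i = A)"

definition special :: "nat \<Rightarrow> (nat \<Rightarrow> 'a) \<Rightarrow> (nat \<Rightarrow> 'a) \<Rightarrow> bool" where
  "special m s s' \<longleftrightarrow> (\<forall>A \<in> s ` I m. is_direct m s s' A \<or> is_reverse m s s' A)"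

end

theory Submission
  imports Defs
begin

text \<open>Write \<open>\<tau> = \<tau>\<^sub>m\<^sub>-\<^sub>1\<close>, an involution of \<open>I\<^sub>m\<close>, so that \<open>s' = s \<circ> \<tau>\<close>. If a value \<open>A\<close> is
  reverse for \<open>(s, s')\<close>, then \<open>s j = A\<close> forces \<open>s (\<tau> (m + 1 - j)) = A\<close>, and
  \<open>j \<mapsto> \<tau> (m + 1 - j)\<close> is the cyclic shift \<open>j \<mapsto> j - 1\<close>, \<open>1 \<mapsto> m\<close> of \<open>I\<^sub>m\<close>. A level set
  invariant under this transitive permutation is all of \<open>I\<^sub>m\<close>, so \<open>s\<close> is constant and
  \<open>s = s'\<close>.\<close>

lemma perm_act_involution:
  assumes maps: "\<sigma> ` I m \<subseteq> I m"
    and involution: "\<And>j. j \<in> I m \<Longrightarrow> \<sigma> (\<sigma> j) = j"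
    and i: "i \<in> I m"
  shows "perm_act m \<sigma> s i = s (\<sigma> i)"
proof -
  have "inj_on \<sigma> (I m)"
    by (metis inj_onI involution)
  then have "inv_into (I m) \<sigma> i = \<sigma> i"
    using maps involution i by (intro inv_into_f_eq) auto
  then show ?thesis
    by (simp add: perm_act_def)
qed

lemma tau_maps_I: "tau (m - 1) ` I m \<subseteq> I m"
  by (auto simp: tau_def I_def)

lemma tau_involution: "j \<in> I m \<Longrightarrow> tau (m - 1) (tau (m - 1) j) = j"
  by (auto simp: tau_def I_def)

lemma perm_act_tau: "i \<in> I m \<Longrightarrow> perm_act m (tau (m - 1)) s i = s (tau (m - 1) i)"
  by (rule perm_act_involution[OF tau_maps_I tau_involution])

lemma tau_reflect:
  "j \<in> I m \<Longrightarrow> tau (m - 1) (m + 1 - j) = (if j = 1 then m else j - 1)"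
  by (auto simp: tau_def I_def)

lemma cyclic_shift_invariant_all:
  assumes shift: "\<And>j. j \<in> I m \<Longrightarrow> P j \<Longrightarrow> P (if j = 1 then m else j - 1)"
    and i: "i \<in> I m" and "P i"
    and k: "k \<in> I m"
  shows "P k"
proof -
  have down: "P k" if "j \<in> I m" "P j" "1 \<le> k" "k \<le> j" for j k
    using \<open>k \<le> j\<close> \<open>P j\<close>
  proof (induction k rule: inc_induct)
    case (step n)
    have "Suc n \<in> I m" "Suc n \<noteq> 1"
      using step.hyps \<open>1 \<le> k\<close> \<open>j \<in> I m\<close> by (auto simp: I_def)
    then show ?case
      using shift[of "Suc n"] step.IH step.prems by simp
  qed
  have "P 1"
    using down[OF i \<open>P i\<close>] i by (simp add: I_def)
  moreover have one: "1 \<in> I m"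
    using i by (auto simp: I_def)
  ultimately have "P m"
    using shift[OF one] by simp
  then show "P k"
    using down[of m k] k one by (auto simp: I_def)
qed

lemma reverse_tau_constant:
  assumes s': "s' = perm_act m (tau (m - 1)) s"
    and reverse: "is_reverse m s s' A"
    and i: "i \<in> I m" and "s i = A"
    and k: "k \<in> I m"
  shows "s k = A"
proof (rule cyclic_shift_invariant_all[where P = "\<lambda>j. s j = A", OF _ i \<open>s i = A\<close> k])
  fix j assume j: "j \<in> I m" and "s j = A"
  then have "s' (m + 1 - j) = A"
    using reverse by (auto simp: is_reverse_def rev_seq_def)
  moreover have "m + 1 - j \<in> I m"
    using j by (auto simp: I_def)
  ultimately have "s (tau (m - 1) (m + 1 - j)) = A"
    using s' perm_act_tau[of "m + 1 - j" m s] by simp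
  then show "s (if j = 1 then m else j - 1) = A"
    by (simp only: tau_reflect[OF j])
qed

theorem mainTheorem19:
  fixes S :: "'a set" and m :: nat and s s' :: "nat \<Rightarrow> 'a"
  assumes "m \<ge> 2"
    and "s ` I m \<subseteq> S"
    and "s' = perm_act m (tau (m - 1)) s"
    and "special m s s'"
  shows "\<forall>i \<in> I m. s i = s' i"
proof
  fix i assume i: "i \<in> I m"
  have "is_direct m s s' (s i) \<or> is_reverse m s s' (s i)"
    using assms(4) i by (auto simp: special_def)
  then show "s i = s' i"
  proof
    assume "is_direct m s s' (s i)"
    then show ?thesis
      using i by (auto simp: is_direct_def)
  next
    assume "is_reverse m s s' (s i)"
    moreover have "tau (m - 1) i \<in> I m"
      using tau_maps_I i by blast
    ultimately have "s (tau (m - 1) i) = s i"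
      using reverse_tau_constant[OF assms(3)] i by blast
    then show ?thesis
      using perm_act_tau[OF i, of s] assms(3) by simp
  qed
qed

end
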